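(* Let $V$ be a finite set and $E^+,E^-\subseteq\binom{V}{2}$. Let \[ \hat{\mathcal{C}} := \{\hat X\in\mathbb{S}^{\{0\}\cup V}_+ : \hat X_{00}=1,\ \hat X_{ii}=\hat X_{0i}\ \forall i\in V,\ \hat X_{ij}\ge 0\ \forall ij\in E^+,\ \hat X_{ij}\le 0\ \forall ij\in E^-\}. \] Then a point $\hat X\in\hat{\mathcal{C}}$ is a vertex of $\hat{\mathcal{C}}$ if and only if $\operatorname{rank}(\hat X)=1$.
   Context: $0$ is a new index not in $V$. $\mathbb{S}^{W}_+$ denotes the real symmetric positive semidefinite matrices indexed by a finite set $W$, with trace inner product. $\binom{V}{2}$ is the set of 2-element subsets $ij=\{i,j\}$ of $V$. For a convex set $\mathcal{C}$ in a finite-dimensional space $\mathbb{E}$ and $\bar x\in\mathcal{C}$, the normal cone is $N_{\mathcal{C}}(\bar x):=\{c : \langle c,x\rangle\le\langle c,\bar x\rangle\ \forall x\in\mathcal{C}\}$; $\bar x$ is a vertex if $\dim N_{\mathcal{C}}(\bar x)=\dim\mathbb{E}$ (here $\mathbb{E}=\mathbb{S}^{\{0\}\cup V}$). *)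

theory Defs
  imports "HOL-Analysis.Analysis"
begin

text \<open>Matrices indexed by the finite type 'n, which plays the role of the index set
  {0} \<union> V; the distinguished element z of 'n is the new index 0, and V = UNIV - {z}.\<close>

definition sym_mats :: "(real^'n^'n) set" where
  "sym_mats = {A. transpose A = A}"

definition psd :: "real^'n^'n \<Rightarrow> bool" where
  "psd A \<longleftrightarrow> transpose A = A \<and> (\<forall>x. 0 \<le> x \<bullet> (A *v x))"

definition Chat :: "'n \<Rightarrow> 'n set set \<Rightarrow> 'n set set \<Rightarrow> (real^'n^'n) set" where
  "Chat z Ep Em = {X. psd X \<and> X $ z $ z = 1 \<and> (\<forall>i. i \<noteq> z \<longrightarrow> X $ i $ i = X $ z $ i)
      \<and> (\<forall>i j. {i, j} \<in> Ep \<longrightarrow> 0 \<le> X $ i $ j)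
      \<and> (\<forall>i j. {i, j} \<in> Em \<longrightarrow> X $ i $ j \<le> 0)}"

text \<open>Normal cone within the ambient space E (inner product on real^n^n is the trace
  inner product sum_ij A_ij B_ij).\<close>
definition normal_cone :: "'a::real_inner set \<Rightarrow> 'a set \<Rightarrow> 'a \<Rightarrow> 'a set" where
  "normal_cone E C x = {c \<in> E. \<forall>y\<in>C. c \<bullet> y \<le> c \<bullet> x}"

definition is_vertex :: "'a::euclidean_space set \<Rightarrow> 'a set \<Rightarrow> 'a \<Rightarrow> bool" where
  "is_vertex E C x \<longleftrightarrow> x \<in> C \<and> aff_dim (normal_cone E C x) = int (dim E)"

end

theory Submission
  imports Defs
begin

(*
  A point of a convex subset of a subspace E is a vertex iff no nonzero direction in E is
  orthogonal to all of its normals.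

  If rank X = 1 then X = x x^T with x_0 = 1 and, by X_ii = X_0i, every x_i in {0, 1}.
  A symmetric D orthogonal to the normals e_0 e_0^T, to the normals of the equalities
  X_ii = X_0i, and to the normals -u u^T with u orthogonal to x (those of the semidefinite cone
  at x x^T) has u^T D u = 0 for all u orthogonal to x; the vectors u = e_a - x_a e_0 then
  force D = 0, because 1 - 2 x_a is never 0.

  If rank X is not 1, a 2x2 minor through the entry (0,0) is nonzero, which yields \<gamma> with
  X \<gamma> nonzero but (X \<gamma>)_0 = 0. Congruences M^T X M that move e_0 towards \<gamma>, rescaled so
  that the constraints X_00 = 1 and X_ii = X_0i survive, form a differentiable curve in the set
  through X with nonzero tangent, and every normal at X is orthogonal to that tangent.
*)

section \<open>Vertices and normal cones\<close>

lemma spans_iff_no_orthogonal_vector: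
  fixes E N :: "'a::euclidean_space set"
  assumes "subspace E" "N \<subseteq> E"
  shows "span N = E \<longleftrightarrow> (\<forall>d\<in>E. (\<forall>c\<in>N. c \<bullet> d = 0) \<longrightarrow> d = 0)"
proof
  assume "span N = E"
  then show "\<forall>d\<in>E. (\<forall>c\<in>N. c \<bullet> d = 0) \<longrightarrow> d = 0"
    by (metis inner_commute inner_eq_zero_iff orthogonal_def orthogonal_to_span)
next
  assume no_orth: "\<forall>d\<in>E. (\<forall>c\<in>N. c \<bullet> d = 0) \<longrightarrow> d = 0"
  have "span N \<subseteq> E" using assms by (simp add: span_minimal)
  show "span N = E"
  proof (rule ccontr)
    assume "span N \<noteq> E"
    moreover have "span E = E" using assms(1) by simp
    ultimately have "span N \<subset> span E" using \<open>span N \<subseteq> E\<close> by (metis psubsetI)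
    then obtain d where "d \<noteq> 0" "d \<in> span E" "\<And>y. y \<in> span N \<Longrightarrow> orthogonal d y"
      using orthogonal_to_subspace_exists_gen by blast
    then show False
      using no_orth assms(1) by (metis inner_commute orthogonal_def span_base span_eq_iff)
  qed
qed

lemma is_vertex_iff_no_orthogonal_direction:
  fixes E :: "'a::euclidean_space set"
  assumes "subspace E"
  shows "is_vertex E C x \<longleftrightarrow>
    x \<in> C \<and> (\<forall>d\<in>E. (\<forall>c\<in>normal_cone E C x. c \<bullet> d = 0) \<longrightarrow> d = 0)"
proof -
  let ?N = "normal_cone E C x"
  have "?N \<subseteq> E" by (auto simp: normal_cone_def)
  have "0 \<in> ?N" using assms by (simp add: normal_cone_def subspace_0)
  then have "aff_dim ?N = int (dim ?N)" by (intro aff_dim_zero hull_inc)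
  moreover have "dim ?N = dim E \<longleftrightarrow> span ?N = E"
    using \<open>?N \<subseteq> E\<close> assms by (metis dim_eq_span dim_span order_refl span_eq_iff)
  ultimately show ?thesis
    unfolding is_vertex_def using spans_iff_no_orthogonal_vector[OF assms \<open>?N \<subseteq> E\<close>] by simp
qed

lemma normal_cone_orthogonal_tangent:
  fixes f :: "real \<Rightarrow> 'a::real_inner"
  assumes "(f has_vector_derivative d) (at 0)" and "f 0 = x"
    and "\<forall>\<^sub>F s in at 0. f s \<in> C" and "c \<in> normal_cone E C x"
  shows "c \<bullet> d = 0"
proof -
  have "((\<lambda>s. c \<bullet> f s) has_real_derivative c \<bullet> d) (at 0)"
    unfolding has_real_derivative_iff_has_vector_derivative
    by (rule bounded_linear.has_vector_derivative[OF bounded_linear_inner_right assms(1)])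
  moreover have "\<forall>\<^sub>F s in at 0. c \<bullet> f s \<le> c \<bullet> f 0"
    using assms(3) by eventually_elim (use assms(2,4) in \<open>auto simp: normal_cone_def\<close>)
  ultimately have "(\<lambda>h. (c \<bullet> d) * h) = (\<lambda>h. 0)"
    unfolding has_field_derivative_def by (rule has_derivative_local_max)
  then show ?thesis by (metis mult.right_neutral)
qed

lemma transpose_add: "transpose (A + B) = transpose A + transpose (B :: 'a::semiring_1^'n^'m)"
  by (simp add: transpose_def vec_eq_iff)

lemma matrix_add_rdistrib: "(A + B) ** C = A ** C + B ** (C :: 'a::semiring_1^'p^'n)"
  by (vector matrix_matrix_mult_def sum.distrib[symmetric] field_simps)

lemma congruence_affine_expand:
  fixes A K :: "real^'n^'n"
  shows "transpose (mat 1 + s *\<^sub>R K) ** A ** (mat 1 + s *\<^sub>R K)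
    = A + s *\<^sub>R (transpose K ** A + A ** K) + s\<^sup>2 *\<^sub>R (transpose K ** A ** K)"
  by (simp add: transpose_add transpose_scalar matrix_add_ldistrib matrix_add_rdistrib
      scalar_matrix_assoc[symmetric] matrix_scalar_ac power2_eq_square algebra_simps)

lemma normalized_congruence_has_vector_derivative:
  fixes A K :: "real^'n^'n"
  shows "((\<lambda>s. inverse (1 + s\<^sup>2 * q) *\<^sub>R (transpose (mat 1 + s *\<^sub>R K) ** A ** (mat 1 + s *\<^sub>R K)))
    has_vector_derivative transpose K ** A + A ** K) (at 0)"
  unfolding congruence_affine_expand by (auto intro!: derivative_eq_intros)

lemma matrix_congruence_nth:
  fixes A B C :: "real^'n^'n"
  shows "(transpose A ** B ** C) $ a $ b = column a A \<bullet> (B *v column b C)"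
proof -
  have "(transpose A ** B ** C) $ a $ b = (\<Sum>k\<in>UNIV. (\<Sum>l\<in>UNIV. A$l$a * B$l$k) * C$k$b)"
    by (simp add: matrix_matrix_mult_def transpose_def)
  also have "\<dots> = (\<Sum>k\<in>UNIV. \<Sum>l\<in>UNIV. A$l$a * B$l$k * C$k$b)"
    by (simp add: sum_distrib_right)
  also have "\<dots> = (\<Sum>l\<in>UNIV. \<Sum>k\<in>UNIV. A$l$a * B$l$k * C$k$b)"
    by (rule sum.swap)
  also have "\<dots> = column a A \<bullet> (B *v column b C)"
    by (simp add: matrix_vector_mult_def column_def inner_vec_def sum_distrib_left mult.assoc)
  finally show ?thesis .
qed

lemma inner_matrix_vector_swap:
  fixes A :: "real^'n^'n"
  assumes "transpose A = A"
  shows "x \<bullet> (A *v y) = y \<bullet> (A *v x)"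
  by (metis assms dot_lmul_matrix inner_commute transpose_matrix_vector)

lemma matrix_vector_mult_axis_nth: "(A *v axis i c) $ j = A$j$i * c"
  by (simp add: matrix_vector_mult_def axis_def if_distrib cong: if_cong)

lemma inner_axis_matrix_vector_axis: "axis i a \<bullet> (A *v axis j b) = a * A$i$j * b"
  by (simp add: inner_axis' matrix_vector_mult_axis_nth)

lemma column_mat_1: "column b (mat 1) = (axis b 1 :: 'a::zero_neq_one^'n)"
  by (simp add: column_def mat_def axis_def vec_eq_iff)

lemma column_mat_1_plus_scaleR:
  "column b (mat 1 + s *\<^sub>R K) = axis b 1 + s *\<^sub>R column b (K :: real^'n^'n)"
  by (simp add: column_def mat_def axis_def vec_eq_iff)

section \<open>Positive semidefinite matrices and rank\<close>

lemma linear_coeff_eq_0_if_quadratic_nonneg: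
  fixes a b :: real
  assumes "\<And>t. 0 \<le> t * a + t\<^sup>2 * b"
  shows "a = 0"
proof (rule ccontr)
  assume "a \<noteq> 0"
  have "0 \<le> b" using assms[of 1] assms[of "-1"] by simp
  define t where "t = - a / (b + 1)"
  have "t * (b + 1) = - a" using \<open>0 \<le> b\<close> by (simp add: t_def)
  have "(b + 1)\<^sup>2 * (t * a + t\<^sup>2 * b) = (t * (b + 1)) * a * (b + 1) + (t * (b + 1))\<^sup>2 * b"
    by (simp add: algebra_simps power2_eq_square)
  also have "\<dots> = - a\<^sup>2 * (b + 1) + a\<^sup>2 * b"
    unfolding \<open>t * (b + 1) = - a\<close> by (simp add: power2_eq_square)
  also have "\<dots> < 0" using \<open>a \<noteq> 0\<close> by simp
  finally show False using assms[of t] by (metis mult_nonneg_nonneg not_le zero_le_power2)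
qed

lemma psd_form_eq_0_imp:
  fixes A :: "real^'n^'n"
  assumes "psd A" and "x \<bullet> (A *v x) = 0"
  shows "A *v x = 0"
proof -
  have sym: "transpose A = A" using assms(1) by (simp add: psd_def)
  have "0 \<le> t * (2 * ((A *v x) \<bullet> (A *v x))) + t\<^sup>2 * ((A *v x) \<bullet> (A *v (A *v x)))" for t
  proof -
    have "0 \<le> (x + t *\<^sub>R (A *v x)) \<bullet> (A *v (x + t *\<^sub>R (A *v x)))"
      using assms(1) by (simp add: psd_def)
    also have "\<dots> = x \<bullet> (A *v x) + t * (x \<bullet> (A *v (A *v x))) + t * ((A *v x) \<bullet> (A *v x))
        + t\<^sup>2 * ((A *v x) \<bullet> (A *v (A *v x)))"
      by (simp add: algebra_simps power2_eq_square)
    also have "x \<bullet> (A *v (A *v x)) = (A *v x) \<bullet> (A *v x)"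
      by (rule inner_matrix_vector_swap[OF sym])
    finally show ?thesis using assms(2) by simp
  qed
  then have "2 * ((A *v x) \<bullet> (A *v x)) = 0" by (rule linear_coeff_eq_0_if_quadratic_nonneg)
  then show ?thesis by simp
qed

lemma psd_nth_sym:
  assumes "psd A"
  shows "A$i$j = A$j$i"
proof -
  have "transpose A $ j $ i = A$j$i" using assms by (simp add: psd_def)
  then show ?thesis by (simp add: transpose_def)
qed

lemma psd_diag_eq_0_imp:
  fixes A :: "real^'n^'n"
  assumes "psd A" and "A$i$i = 0"
  shows "A$i$j = 0" and "A$j$i = 0"
proof -
  have "A *v axis i 1 = 0"
    using assms by (intro psd_form_eq_0_imp) (simp_all add: inner_axis_matrix_vector_axis)
  then show "A$j$i = 0" using matrix_vector_mult_axis_nth[of A i 1 j] by simp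
  then show "A$i$j = 0" using psd_nth_sym[OF assms(1)] by simp
qed

lemma psd_matrix_vector_nth_diag_cancel:
  fixes A :: "real^'n^'n"
  assumes "psd A"
  shows "(A *v v)$i / A$i$i * A$i$i = (A *v v)$i"
proof (cases "A$i$i = 0")
  case True
  then have "A$i$j = 0" for j using psd_diag_eq_0_imp(1)[OF assms] by blast
  then show ?thesis by (simp add: matrix_vector_mult_def)
qed simp

lemma psd_congruence:
  fixes A M :: "real^'n^'n"
  assumes "psd A"
  shows "psd (transpose M ** A ** M)"
  unfolding psd_def
proof
  have "transpose A = A" using assms by (simp add: psd_def)
  then show "transpose (transpose M ** A ** M) = transpose M ** A ** M"
    by (simp add: matrix_transpose_mul matrix_mul_assoc)
  show "\<forall>x. 0 \<le> x \<bullet> ((transpose M ** A ** M) *v x)"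
  proof
    fix x
    have "(transpose M ** A ** M) *v x = transpose M *v (A *v (M *v x))"
      by (simp add: matrix_vector_mul_assoc matrix_mul_assoc)
    then have "x \<bullet> ((transpose M ** A ** M) *v x) = (M *v x) \<bullet> (A *v (M *v x))"
      using dot_lmul_matrix[of "A *v (M *v x)" M x] by (simp add: inner_commute)
    then show "0 \<le> x \<bullet> ((transpose M ** A ** M) *v x)" using assms by (simp add: psd_def)
  qed
qed

lemma psd_scaleR: "psd A \<Longrightarrow> 0 \<le> r \<Longrightarrow> psd (r *\<^sub>R A)"
  by (simp add: psd_def transpose_scalar scaleR_matrix_vector_assoc[symmetric])

lemma rank_le_1_if_outer:
  fixes A :: "real^'n^'m"
  assumes "\<And>i j. A$i$j = u$i * w$j"
  shows "rank A \<le> 1"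
proof -
  have "rows A \<subseteq> span {w}"
  proof
    fix r assume "r \<in> rows A"
    then obtain i where "r = A$i" by (auto simp: rows_def row_def)
    then have "r = u$i *\<^sub>R w" using assms by (simp add: vec_eq_iff)
    then show "r \<in> span {w}" by (simp add: span_mul span_base)
  qed
  then have "dim (rows A) \<le> card {w}" by (rule dim_le_card) simp
  then show ?thesis by (simp add: row_rank_def)
qed

lemma rank_eq_1_imp_outer:
  fixes A :: "real^'n^'m"
  assumes "rank A = 1"
  obtains u w where "\<And>i j. A$i$j = u i * w$j"
proof -
  obtain B where B: "B \<subseteq> rows A" "rows A \<subseteq> span B" "card B = dim (rows A)"
    by (meson basis_exists)
  then obtain w where "B = {w}" using assms by (auto simp: row_rank_def card_Suc_eq)
  have "\<exists>c. A$i = c *\<^sub>R w" for i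
  proof -
    have "A$i \<in> rows A" by (auto simp: rows_def row_def vec_eq_iff)
    then show ?thesis using B \<open>B = {w}\<close> by (auto simp: span_singleton)
  qed
  then obtain u where "\<And>i. A$i = u i *\<^sub>R w" by metis
  then have "A$i$j = u i * w$j" for i j by simp
  then show ?thesis by (rule that)
qed

lemma rank_eq_1_iff_minors_through_pivot:
  fixes A :: "real^'n^'m"
  assumes "A$p$q \<noteq> 0"
  shows "rank A = 1 \<longleftrightarrow> (\<forall>i j. A$i$j * A$p$q = A$i$q * A$p$j)"
proof
  assume "rank A = 1"
  then obtain u w where "\<And>i j. A$i$j = u i * w$j" using rank_eq_1_imp_outer by blast
  then show "\<forall>i j. A$i$j * A$p$q = A$i$q * A$p$j" by simp
next
  assume minors: "\<forall>i j. A$i$j * A$p$q = A$i$q * A$p$j"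
  have "A$i$j = (\<chi> i. A$i$q)$i * (A$p /\<^sub>R A$p$q)$j" for i j
    using minors[rule_format, of i j] assms by (simp add: field_simps)
  then have "rank A \<le> 1" by (rule rank_le_1_if_outer)
  moreover have "rank A \<noteq> 0"
  proof
    assume "rank A = 0"
    then have "rows A \<subseteq> {0}" by (simp add: row_rank_def)
    moreover have "A$p \<in> rows A" by (auto simp: rows_def row_def vec_eq_iff)
    ultimately show False using assms by auto
  qed
  ultimately show "rank A = 1" by simp
qed

section \<open>Rank-one points are vertices\<close>

definition sym_outer :: "real^'n \<Rightarrow> real^'n \<Rightarrow> real^'n^'n" where
  "sym_outer u v = (\<chi> i j. u$i * v$j + v$i * u$j)"

lemma sym_outer_in_sym_mats: "sym_outer u v \<in> sym_mats"
  by (simp add: sym_mats_def sym_outer_def transpose_def vec_eq_iff)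

lemma subspace_sym_mats: "subspace sym_mats"
  by (auto simp: subspace_def sym_mats_def transpose_add transpose_scalar transpose_def vec_eq_iff)

lemma inner_sym_outer: "sym_outer u v \<bullet> A = u \<bullet> (A *v v) + v \<bullet> (A *v u)"
proof -
  have "sym_outer u v \<bullet> A = (\<Sum>i\<in>UNIV. \<Sum>j\<in>UNIV. u$i * (A$i$j * v$j) + v$i * (A$i$j * u$j))"
    by (simp add: sym_outer_def inner_vec_def algebra_simps)
  also have "\<dots> = u \<bullet> (A *v v) + v \<bullet> (A *v u)"
    by (simp add: inner_vec_def matrix_vector_mult_def sum_distrib_left sum.distrib)
  finally show ?thesis .
qed

lemma sym_matrix_eq_0_if_form_vanishes:
  fixes D :: "real^'n^'n" and x :: "real^'n"
  assumes D_sym: "transpose D = D" and "x$z = 1" and x_binary: "\<And>a. x$a = 0 \<or> x$a = 1"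
    and D_zz: "D$z$z = 0" and D_diag: "\<And>a. a \<noteq> z \<Longrightarrow> D$a$a = D$z$a"
    and form_0: "\<And>u. x \<bullet> u = 0 \<Longrightarrow> u \<bullet> (D *v u) = 0"
  shows "D = 0"
proof -
  have D_swap: "u \<bullet> (D *v v) = v \<bullet> (D *v u)" for u v
    by (rule inner_matrix_vector_swap[OF D_sym])
  have D_nth_sym: "D$a$b = D$b$a" for a b
    using D_swap[of "axis a 1" "axis b 1"] by (simp add: inner_axis_matrix_vector_axis)
  define f :: "'n \<Rightarrow> real^'n" where "f a = axis a 1 - x$a *\<^sub>R axis z 1" for a
  have x_f: "x \<bullet> f a = 0" if "a \<noteq> z" for a
    using that \<open>x$z = 1\<close> by (simp add: f_def inner_diff_right inner_axis)
  have f_form: "f a \<bullet> (D *v f b) = D$a$b - x$b * D$a$z - x$a * D$z$b + x$a * x$b * D$z$z" for a b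
    by (simp add: f_def inner_axis_matrix_vector_axis algebra_simps)
  have D_az: "D$a$z = 0" if "a \<noteq> z" for a
  proof -
    have "D$a$z * (1 - 2 * x$a) = 0"
      using form_0[OF x_f[OF that]] f_form[of a a] D_zz D_diag[OF that] D_nth_sym[of a z]
      by (simp add: algebra_simps)
    then show ?thesis using x_binary[of a] by auto
  qed
  have D_ab: "D$a$b = 0" if "a \<noteq> z" "b \<noteq> z" for a b
  proof -
    have "x \<bullet> (f a + f b) = 0" using x_f that by (simp add: inner_add_right)
    then have "(f a + f b) \<bullet> (D *v (f a + f b)) = 0" by (rule form_0)
    then have "2 * (f a \<bullet> (D *v f b)) = 0"
      using form_0[OF x_f[OF that(1)]] form_0[OF x_f[OF that(2)]] D_swap[of "f b" "f a"]
      by (simp add: matrix_vector_right_distrib inner_add_left inner_add_right)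
    then show ?thesis
      using f_form[of a b] D_zz D_az[OF that(1)] D_az[OF that(2)] D_nth_sym[of z b] by simp
  qed
  have "D$a$b = 0" for a b
    using D_zz D_az D_ab D_nth_sym by (cases "a = z"; cases "b = z") auto
  then show ?thesis by (simp add: vec_eq_iff)
qed

lemma normal_cone_Chat_rank_one:
  fixes X :: "real^'n^'n" and x :: "real^'n"
  assumes XC: "X \<in> Chat z Ep Em" and X_outer: "\<And>i j. X$i$j = x$i * x$j"
  defines "N \<equiv> normal_cone sym_mats (Chat z Ep Em) X" and "e \<equiv> \<lambda>a. axis a (1::real)"
  shows "sym_outer (e z) (e z) \<in> N"
    and "a \<noteq> z \<Longrightarrow> sym_outer (e a) (e a) - sym_outer (e z) (e a) \<in> N"
    and "x \<bullet> u = 0 \<Longrightarrow> - sym_outer u u \<in> N"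
proof -
  have normal: "c \<in> N" if "c \<in> sym_mats" and "\<And>Y. Y \<in> Chat z Ep Em \<Longrightarrow> c \<bullet> Y \<le> c \<bullet> X" for c
    using that by (simp add: N_def normal_cone_def)
  show "sym_outer (e z) (e z) \<in> N"
    using XC by (intro normal) (auto simp: e_def sym_outer_in_sym_mats inner_sym_outer
        inner_axis_matrix_vector_axis Chat_def)
  show "sym_outer (e a) (e a) - sym_outer (e z) (e a) \<in> N" if "a \<noteq> z"
  proof -
    have "(sym_outer (e a) (e a) - sym_outer (e z) (e a)) \<bullet> Y = 0" if "Y \<in> Chat z Ep Em" for Y
      using that \<open>a \<noteq> z\<close> psd_nth_sym[of Y a z]
      by (simp add: e_def Chat_def inner_diff_left inner_sym_outer inner_axis_matrix_vector_axis)
    then show ?thesis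
      using XC by (intro normal) (simp_all add: subspace_diff[OF _ sym_outer_in_sym_mats
          sym_outer_in_sym_mats] subspace_sym_mats)
  qed
  show "- sym_outer u u \<in> N" if "x \<bullet> u = 0"
  proof -
    have "X *v u = (x \<bullet> u) *\<^sub>R x"
      by (simp add: vec_eq_iff matrix_vector_mult_def X_outer inner_vec_def sum_distrib_left mult_ac)
    then show ?thesis
      using that by (intro normal) (auto simp: subspace_neg[OF subspace_sym_mats sym_outer_in_sym_mats]
          inner_sym_outer Chat_def psd_def)
  qed
qed

lemma Chat_rank_one_no_orthogonal_direction:
  fixes X D :: "real^'n^'n" and x :: "real^'n"
  assumes XC: "X \<in> Chat z Ep Em" and X_outer: "\<And>i j. X$i$j = x$i * x$j" and "x$z = 1"
    and "D \<in> sym_mats"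
    and orth: "\<forall>c\<in>normal_cone sym_mats (Chat z Ep Em) X. c \<bullet> D = 0"
  shows "D = 0"
proof -
  note normals = normal_cone_Chat_rank_one[OF XC X_outer]
  have D_sym: "transpose D = D" using \<open>D \<in> sym_mats\<close> by (simp add: sym_mats_def)
  then have D_nth_sym: "D$a$b = D$b$a" for a b
    using inner_matrix_vector_swap[of D "axis a 1" "axis b 1"] by (simp add: inner_axis_matrix_vector_axis)
  have "D$z$z = 0"
    using orth[rule_format, OF normals(1)] by (simp add: inner_sym_outer inner_axis_matrix_vector_axis)
  moreover have "D$a$a = D$z$a" if "a \<noteq> z" for a
    using orth[rule_format, OF normals(2)[OF that]] D_nth_sym[of a z]
    by (simp add: inner_diff_left inner_sym_outer inner_axis_matrix_vector_axis)
  moreover have "u \<bullet> (D *v u) = 0" if "x \<bullet> u = 0" for u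
    using orth[rule_format, OF normals(3)[OF that]] by (simp add: inner_sym_outer)
  moreover have "x$a = 0 \<or> x$a = 1" for a
  proof (cases "a = z")
    case False
    then have "x$a * x$a = x$a" using XC \<open>x$z = 1\<close> by (simp add: Chat_def X_outer)
    then show ?thesis by (metis mult_cancel_right1)
  qed (simp add: \<open>x$z = 1\<close>)
  ultimately show ?thesis using sym_matrix_eq_0_if_form_vanishes[OF D_sym \<open>x$z = 1\<close>] by blast
qed

section \<open>A curve through points of higher rank\<close>

(*
  Column z of the identity moves towards \<gamma>, and column b \<noteq> z is rescaled by
  1 + s (X \<gamma>)_b / X_bb, which keeps X_bb = X_zb (if X_bb = 0 the quotient is 0, and then
  row b of X vanishes anyway). When (X \<gamma>)_z = 0 the normalising factor restores X_zz = 1.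
*)
definition tangent_generator :: "'n \<Rightarrow> real^'n^'n \<Rightarrow> real^'n \<Rightarrow> real^'n^'n" where
  "tangent_generator z X \<gamma> =
    (\<chi> a b. if b = z then \<gamma>$a else if a = b then (X *v \<gamma>)$b / X$b$b else 0)"

definition congruence_curve :: "'n \<Rightarrow> real^'n^'n \<Rightarrow> real^'n \<Rightarrow> real \<Rightarrow> real^'n^'n" where
  "congruence_curve z X \<gamma> s = inverse (1 + s\<^sup>2 * (\<gamma> \<bullet> (X *v \<gamma>))) *\<^sub>R
    (transpose (mat 1 + s *\<^sub>R tangent_generator z X \<gamma>) ** X ** (mat 1 + s *\<^sub>R tangent_generator z X \<gamma>))"

lemma column_tangent_generator:
  "column b (tangent_generator z X \<gamma>) =
    (if b = z then \<gamma> else ((X *v \<gamma>)$b / X$b$b) *\<^sub>R axis b 1)"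
  by (auto simp: column_def tangent_generator_def vec_eq_iff axis_def)

lemma congruence_curve_0 [simp]: "congruence_curve z X \<gamma> 0 = X"
  by (simp add: congruence_curve_def)

lemma congruence_curve_has_vector_derivative:
  "(congruence_curve z X \<gamma> has_vector_derivative
     transpose (tangent_generator z X \<gamma>) ** X + X ** tangent_generator z X \<gamma>) (at 0)"
  unfolding congruence_curve_def[abs_def]
  by (rule normalized_congruence_has_vector_derivative)

lemma congruence_curve_numerator_nth:
  fixes X :: "real^'n^'n" and s :: real
  assumes "transpose X = X" and "X$z$z = 1" and "(X *v \<gamma>)$z = 0"
  defines "M \<equiv> mat 1 + s *\<^sub>R tangent_generator z X \<gamma>"
    and "c \<equiv> \<lambda>b. 1 + s * ((X *v \<gamma>)$b / X$b$b)"
  shows "(transpose M ** X ** M)$z$z = 1 + s\<^sup>2 * (\<gamma> \<bullet> (X *v \<gamma>))"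
    and "b \<noteq> z \<Longrightarrow> (transpose M ** X ** M)$z$b = c b * (X$z$b + s * (X *v \<gamma>)$b)"
    and "a \<noteq> z \<Longrightarrow> b \<noteq> z \<Longrightarrow> (transpose M ** X ** M)$a$b = c a * c b * X$a$b"
proof -
  have col: "column b M = (if b = z then axis z 1 + s *\<^sub>R \<gamma> else c b *\<^sub>R axis b 1)" for b
    by (simp add: M_def c_def column_mat_1_plus_scaleR column_tangent_generator algebra_simps)
  have swap: "u \<bullet> (X *v v) = v \<bullet> (X *v u)" for u v
    by (rule inner_matrix_vector_swap[OF assms(1)])
  have \<gamma>_axis: "\<gamma> \<bullet> (X *v axis b 1) = (X *v \<gamma>)$b" for b
    using swap[of \<gamma> "axis b 1"] by (simp add: inner_axis')
  show "(transpose M ** X ** M)$z$z = 1 + s\<^sup>2 * (\<gamma> \<bullet> (X *v \<gamma>))"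
    using assms(2,3) \<gamma>_axis[of z]
    by (simp add: matrix_congruence_nth col inner_axis_matrix_vector_axis inner_axis'
        matrix_vector_mult_axis_nth power2_eq_square algebra_simps)
  show "b \<noteq> z \<Longrightarrow> (transpose M ** X ** M)$z$b = c b * (X$z$b + s * (X *v \<gamma>)$b)"
    using \<gamma>_axis[of b]
    by (simp add: matrix_congruence_nth col inner_axis_matrix_vector_axis algebra_simps)
  show "a \<noteq> z \<Longrightarrow> b \<noteq> z \<Longrightarrow> (transpose M ** X ** M)$a$b = c a * c b * X$a$b"
    by (simp add: matrix_congruence_nth col matrix_vector_mult_scaleR inner_axis_matrix_vector_axis)
qed

lemma congruence_curve_in_Chat:
  fixes X :: "real^'n^'n"
  assumes edges: "Ep \<subseteq> {e. e \<subseteq> UNIV - {z} \<and> card e = 2}" "Em \<subseteq> {e. e \<subseteq> UNIV - {z} \<and> card e = 2}"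
    and XC: "X \<in> Chat z Ep Em" and g_z: "(X *v \<gamma>)$z = 0"
    and scales_nonneg: "\<And>b. b \<noteq> z \<Longrightarrow> 0 \<le> 1 + s * ((X *v \<gamma>)$b / X$b$b)"
  shows "congruence_curve z X \<gamma> s \<in> Chat z Ep Em"
proof -
  let ?M = "mat 1 + s *\<^sub>R tangent_generator z X \<gamma>"
  let ?F = "transpose ?M ** X ** ?M"
  let ?g = "X *v \<gamma>"
  let ?c = "\<lambda>b. 1 + s * (?g$b / X$b$b)"
  let ?r = "1 + s\<^sup>2 * (\<gamma> \<bullet> ?g)"
  have psd_X: "psd X" and X_zz: "X$z$z = 1" and X_diag: "\<And>i. i \<noteq> z \<Longrightarrow> X$i$i = X$z$i"
    using XC by (auto simp: Chat_def)
  have "transpose X = X" using psd_X by (simp add: psd_def)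
  note F_nth = congruence_curve_numerator_nth[OF this X_zz g_z]
  have curve: "congruence_curve z X \<gamma> s = inverse ?r *\<^sub>R ?F"
    by (simp add: congruence_curve_def)
  have "0 \<le> \<gamma> \<bullet> ?g" using psd_X by (simp add: psd_def)
  then have "0 < ?r" by (simp add: add_pos_nonneg)
  have off_z: "a \<noteq> z" "b \<noteq> z" if "{a, b} \<in> Ep \<union> Em" for a b
    using edges that by auto
  have "?F$b$b = ?F$z$b" if "b \<noteq> z" for b
  proof -
    have "?c b * X$b$b = X$b$b + s * ?g$b"
      by (simp only: distrib_right mult_1_left mult.assoc psd_matrix_vector_nth_diag_cancel[OF psd_X])
    then show ?thesis using that F_nth(2,3)[of b] X_diag[OF that] by simp
  qed
  moreover have "0 \<le> ?F$a$b" if "{a, b} \<in> Ep" for a b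
    using that off_z[of a b] XC F_nth(3) scales_nonneg by (simp add: Chat_def)
  moreover have "?F$a$b \<le> 0" if "{a, b} \<in> Em" for a b
    using that off_z[of a b] XC F_nth(3) scales_nonneg by (simp add: Chat_def mult_nonneg_nonpos)
  moreover have "psd (inverse ?r *\<^sub>R ?F)"
    using \<open>0 < ?r\<close> by (intro psd_scaleR psd_congruence psd_X) simp
  ultimately show ?thesis
    using \<open>0 < ?r\<close> F_nth(1) unfolding curve by (simp add: Chat_def mult_nonneg_nonpos)
qed

lemma eventually_congruence_curve_in_Chat:
  fixes X :: "real^'n^'n"
  assumes "Ep \<subseteq> {e. e \<subseteq> UNIV - {z} \<and> card e = 2}" "Em \<subseteq> {e. e \<subseteq> UNIV - {z} \<and> card e = 2}"
    and "X \<in> Chat z Ep Em" and "(X *v \<gamma>)$z = 0"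
  shows "\<forall>\<^sub>F s in at 0. congruence_curve z X \<gamma> s \<in> Chat z Ep Em"
proof -
  have "((\<lambda>s. 1 + s * w) \<longlongrightarrow> 1) (at (0::real))" for w :: real
    by (auto intro!: tendsto_eq_intros)
  then have "\<forall>\<^sub>F s in at 0. 0 < 1 + s * ((X *v \<gamma>)$b / X$b$b)" for b
    by (rule order_tendstoD(1)) simp
  then have "\<forall>\<^sub>F s in at 0. \<forall>b. 0 < 1 + s * ((X *v \<gamma>)$b / X$b$b)"
    by (rule eventually_all_finite)
  then show ?thesis
    by eventually_elim (intro congruence_curve_in_Chat[OF assms] less_imp_le, blast)
qed

lemma congruence_curve_tangent_nth:
  fixes X :: "real^'n^'n" and \<gamma> :: "real^'n"
  assumes X_sym: "transpose X = X" and "k \<noteq> z" and "X$z$k = X$k$k" and "X$k$k \<noteq> 0"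
  defines "G \<equiv> tangent_generator z X \<gamma>"
  shows "(transpose G ** X + X ** G)$z$k = 2 * (X *v \<gamma>)$k"
proof -
  have "(transpose G ** X + X ** G)$z$k = (transpose G ** X ** mat 1)$z$k + (transpose (mat 1) ** X ** G)$z$k"
    by simp
  also have "\<dots> = \<gamma> \<bullet> (X *v axis k 1) + (X *v \<gamma>)$k / X$k$k * X$z$k"
    using \<open>k \<noteq> z\<close> unfolding matrix_congruence_nth
    by (simp add: column_mat_1 G_def column_tangent_generator matrix_vector_mult_scaleR
        inner_axis_matrix_vector_axis)
  also have "\<dots> = 2 * (X *v \<gamma>)$k"
    using inner_matrix_vector_swap[OF X_sym, of \<gamma> "axis k 1"] assms(3,4) by (simp add: inner_axis')
  finally show ?thesis .
qed

lemma Chat_orthogonal_direction_if_not_rank_one: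
  fixes X :: "real^'n^'n"
  assumes edges: "Ep \<subseteq> {e. e \<subseteq> UNIV - {z} \<and> card e = 2}" "Em \<subseteq> {e. e \<subseteq> UNIV - {z} \<and> card e = 2}"
    and XC: "X \<in> Chat z Ep Em" and not_rank_one: "X$k$j \<noteq> X$k$z * X$z$j"
  obtains D where "D \<in> sym_mats" and "D \<noteq> 0"
    and "\<forall>c\<in>normal_cone sym_mats (Chat z Ep Em) X. c \<bullet> D = 0"
proof -
  have psd_X: "psd X" and X_zz: "X$z$z = 1" and X_diag: "\<And>i. i \<noteq> z \<Longrightarrow> X$i$i = X$z$i"
    using XC by (auto simp: Chat_def)
  have X_sym: "transpose X = X" using psd_X by (simp add: psd_def)
  define \<gamma> :: "real^'n" where "\<gamma> = axis j 1 - X$z$j *\<^sub>R axis z 1"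
  define G where "G = tangent_generator z X \<gamma>"
  define D where "D = transpose G ** X + X ** G"
  have g_nth: "(X *v \<gamma>)$l = X$l$j - X$z$j * X$l$z" for l
    by (simp add: \<gamma>_def matrix_vector_mult_diff_distrib matrix_vector_mult_scaleR matrix_vector_mult_axis_nth)
  have g_z: "(X *v \<gamma>)$z = 0" using X_zz by (simp add: g_nth)
  have g_k: "(X *v \<gamma>)$k \<noteq> 0" using not_rank_one by (simp add: g_nth mult.commute)
  then have "k \<noteq> z" using g_z by auto
  have "X$k$k \<noteq> 0" using g_k psd_diag_eq_0_imp(1)[OF psd_X] by (auto simp: g_nth)
  then have "D$z$k = 2 * (X *v \<gamma>)$k"
    using congruence_curve_tangent_nth[OF X_sym \<open>k \<noteq> z\<close>] X_diag[OF \<open>k \<noteq> z\<close>]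
    by (simp add: D_def G_def)
  then have "D \<noteq> 0" using g_k by auto
  moreover have "D \<in> sym_mats"
    using X_sym by (simp add: sym_mats_def D_def transpose_add matrix_transpose_mul add.commute)
  moreover have "c \<bullet> D = 0" if "c \<in> normal_cone sym_mats (Chat z Ep Em) X" for c
    unfolding D_def G_def
    by (rule normal_cone_orthogonal_tangent[OF congruence_curve_has_vector_derivative
        congruence_curve_0 eventually_congruence_curve_in_Chat[OF edges XC g_z] that])
  ultimately show ?thesis using that by blast
qed

theorem theorem3p1:
  fixes z :: "'n::finite" and Ep Em :: "'n set set" and X :: "real^'n^'n"
  assumes "Ep \<subseteq> {e. e \<subseteq> UNIV - {z} \<and> card e = 2}"
    and "Em \<subseteq> {e. e \<subseteq> UNIV - {z} \<and> card e = 2}"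
    and "X \<in> Chat z Ep Em"
  shows "is_vertex sym_mats (Chat z Ep Em) X \<longleftrightarrow> rank X = 1"
proof -
  have "X$z$z = 1" and psd_X: "psd X" using assms(3) by (auto simp: Chat_def)
  then have rank_one_iff: "rank X = 1 \<longleftrightarrow> (\<forall>i j. X$i$j = X$z$i * X$z$j)"
    using rank_eq_1_iff_minors_through_pivot[of X z z] psd_nth_sym[OF psd_X] by simp
  note vertex_iff = is_vertex_iff_no_orthogonal_direction[OF subspace_sym_mats]
  show ?thesis
  proof
    assume "is_vertex sym_mats (Chat z Ep Em) X"
    then show "rank X = 1"
      unfolding vertex_iff rank_one_iff
      using Chat_orthogonal_direction_if_not_rank_one[OF assms] psd_nth_sym[OF psd_X] by metis
  next
    assume "rank X = 1"
    then show "is_vertex sym_mats (Chat z Ep Em) X"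
      unfolding vertex_iff rank_one_iff
      using assms(3) \<open>X$z$z = 1\<close> Chat_rank_one_no_orthogonal_direction by blast
  qed
qed

end
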